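(* Let $c_1, c_2$ be \textsc{Imp} commands, $\Phi,\Psi$ relational assertions, and $r$ a \textsc{CoreRel} aligned command. If $\langle\!\langle c_1\mid c_2\rangle\!\rangle \equiv r$ and $\vdash \{\Phi\}\ [\![r]\!]\ \{\Psi\}$ is derivable in the \textsc{Imp} program logic, then $\models_R \{\Phi\}\ c_1 \otimes c_2\ \{\Psi\}$.
   Context: \textsc{Imp} is the imperative language with integer expressions $a ::= n \mid x \mid a+a \mid a-a \mid a*a$, Boolean expressions $b ::= \mathsf{true}\mid\mathsf{false}\mid a=a \mid a<a \mid \neg b \mid b\wedge b$, and commands $c ::= \mathsf{skip} \mid c;c \mid x:=a \mid \mathsf{while}\ b\ c \mid \mathsf{if}\ b\ \mathsf{then}\ c\ \mathsf{else}\ c$. States are partial functions from identifiers to integers; $\sigma,c\Downarrow\sigma'$ is standard big-step semantics. $\vdash\{\phi\}\,c\,\{\psi\}$ denotes derivability in a standard (sound) Hoare logic for partial correctness of \textsc{Imp}, parameterized over an assertion language with satisfaction $\sigma\models\phi$. Relational assertions refer to variables of the left and right programs via subscripts $1$ and $2$ (e.g. $x_1 > x_2$); for states $\sigma_1,\sigma_2$ of the two programs, $\sigma_1\uplus\sigma_2$ is the combined state over the disjoint (left/right renamed) variable spaces. Relational safety: $\models_R\{\Phi\}\,c_1\otimes c_2\,\{\Psi\}$ iff for all $\sigma_1,\sigma_2$ with $\sigma_1\uplus\sigma_2\models\Phi$, and all $\sigma_1',\sigma_2'$ with $\sigma_1,c_1\Downarrow\sigma_1'$ and $\sigma_2,c_2\Downarrow\sigma_2'$,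 we have $\sigma_1'\uplus\sigma_2'\models\Psi$. \textsc{CoreRel} aligned commands are $r ::= \langle\!\langle c \mid c\rangle\!\rangle \mid r ;; r \mid \mathsf{if}_R\ \langle\!\langle b\mid b\rangle\!\rangle\ \mathsf{then}\ r\ \mathsf{else}\ r \mid \mathsf{while}_R\ \langle\!\langle b \mid b\rangle\!\rangle\ r$, with big-step semantics $(\sigma_1,\sigma_2),r\Downarrow_R(\sigma_1',\sigma_2')$: $\langle\!\langle c_1\mid c_2\rangle\!\rangle$ runs $c_1$ on $\sigma_1$ and $c_2$ on $\sigma_2$ independently; $r_1;;r_2$ runs $r_1$ then $r_2$; $\mathsf{if}_R\langle\!\langle b_1\mid b_2\rangle\!\rangle\,\mathsf{then}\,r_1\,\mathsf{else}\,r_2$ runs $r_1$ if $b_1$ is true in $\sigma_1$ and $b_2$ is true in $\sigma_2$, and runs $r_2$ if either is false; $\mathsf{while}_R\langle\!\langle b_1\mid b_2\rangle\!\rangle\,r$ stops (leaving the states unchanged) as soon as either $b_1$ is false in the left state or $b_2$ is false in the right state, and otherwise runs $r$ and repeats. $r_1\equiv r_2$ iff for all $\sigma_1,\sigma_2,\sigma_1',\sigma_2'$, $(\sigma_1,\sigma_2),r_1\Downarrow_R(\sigma_1',\sigma_2')\Leftrightarrow(\sigma_1,\sigma_2),r_2\Downarrow_R(\sigma_1',\sigma_2')$. Reification $[\![\cdot]\!]$ into \textsc{Imp}, using renamings $[\![\cdot]\!]_L,[\![\cdot]\!]_R$ that map left/right variables to disjoint identifier sets (left variable $x\mapsto x_1$,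 right $x\mapsto x_2$): $[\![\langle\!\langle s_1\mid s_2\rangle\!\rangle]\!] = [\![s_1]\!]_L;[\![s_2]\!]_R$; $[\![r_1;;r_2]\!]=[\![r_1]\!];[\![r_2]\!]$; $[\![\mathsf{while}_R\langle\!\langle b_1\mid b_2\rangle\!\rangle\,r]\!]=\mathsf{while}\ ([\![b_1]\!]_L\wedge[\![b_2]\!]_R)\ [\![r]\!]$; $[\![\mathsf{if}_R\langle\!\langle b_1\mid b_2\rangle\!\rangle\,\mathsf{then}\,r_1\,\mathsf{else}\,r_2]\!]=\mathsf{if}\ ([\![b_1]\!]_L\wedge[\![b_2]\!]_R)\ \mathsf{then}\ [\![r_1]\!]\ \mathsf{else}\ [\![r_2]\!]$. *)

theory Defs
  imports Main
begin

datatype 'v aexp = N int | V 'v | Plus "'v aexp" "'v aexp" | Minus "'v aexp" "'v aexp"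
  | Times "'v aexp" "'v aexp"

datatype 'v bexp = Bc bool | Eq "'v aexp" "'v aexp" | Less "'v aexp" "'v aexp"
  | Not "'v bexp" | And "'v bexp" "'v bexp"

datatype 'v com = SKIP | Seq "'v com" "'v com" | Assign 'v "'v aexp"
  | While "'v bexp" "'v com" | If "'v bexp" "'v com" "'v com"

type_synonym 'v state = "'v \<Rightarrow> int option"

definition lift2 :: "('a \<Rightarrow> 'b \<Rightarrow> 'c) \<Rightarrow> 'a option \<Rightarrow> 'b option \<Rightarrow> 'c option" where
  "lift2 f x y = (case x of None \<Rightarrow> None | Some a \<Rightarrow> (case y of None \<Rightarrow> None | Some b \<Rightarrow> Some (f a b)))"

fun aval :: "'v aexp \<Rightarrow> 'v state \<Rightarrow> int option" where
  "aval (N n) s = Some n"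
| "aval (V x) s = s x"
| "aval (Plus a1 a2) s = lift2 (+) (aval a1 s) (aval a2 s)"
| "aval (Minus a1 a2) s = lift2 (-) (aval a1 s) (aval a2 s)"
| "aval (Times a1 a2) s = lift2 (*) (aval a1 s) (aval a2 s)"

fun bval :: "'v bexp \<Rightarrow> 'v state \<Rightarrow> bool option" where
  "bval (Bc v) s = Some v"
| "bval (Eq a1 a2) s = lift2 (=) (aval a1 s) (aval a2 s)"
| "bval (Less a1 a2) s = lift2 (<) (aval a1 s) (aval a2 s)"
| "bval (Not b) s = map_option (\<lambda>v. \<not> v) (bval b s)"
| "bval (And b1 b2) s = lift2 (\<and>) (bval b1 s) (bval b2 s)"

inductive big_step :: "'v state \<Rightarrow> 'v com \<Rightarrow> 'v state \<Rightarrow> bool" where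
  Skip: "big_step s SKIP s"
| Assign: "aval a s = Some v \<Longrightarrow> big_step s (Assign x a) (s(x \<mapsto> v))"
| Seq: "big_step s c1 s' \<Longrightarrow> big_step s' c2 s'' \<Longrightarrow> big_step s (Seq c1 c2) s''"
| IfTrue: "bval b s = Some True \<Longrightarrow> big_step s c1 t \<Longrightarrow> big_step s (If b c1 c2) t"
| IfFalse: "bval b s = Some False \<Longrightarrow> big_step s c2 t \<Longrightarrow> big_step s (If b c1 c2) t"
| WhileFalse: "bval b s = Some False \<Longrightarrow> big_step s (While b c) s"
| WhileTrue: "bval b s = Some True \<Longrightarrow> big_step s c s' \<Longrightarrow> big_step s' (While b c) s''
    \<Longrightarrow> big_step s (While b c) s''"

type_synonym 'v assn = "'v state \<Rightarrow> bool"

definition sat :: "'v state \<Rightarrow> 'v assn \<Rightarrow> bool" where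
  "sat s P = P s"

inductive hoare :: "'v assn \<Rightarrow> 'v com \<Rightarrow> 'v assn \<Rightarrow> bool" where
  HSkip: "hoare P SKIP P"
| HAssign: "hoare (\<lambda>s. \<exists>v. aval a s = Some v \<and> sat (s(x \<mapsto> v)) Q) (Assign x a) Q"
| HSeq: "hoare P c1 Q \<Longrightarrow> hoare Q c2 R \<Longrightarrow> hoare P (Seq c1 c2) R"
| HIf: "hoare (\<lambda>s. sat s P \<and> bval b s = Some True) c1 Q
    \<Longrightarrow> hoare (\<lambda>s. sat s P \<and> bval b s = Some False) c2 Q
    \<Longrightarrow> hoare P (If b c1 c2) Q"
| HWhile: "hoare (\<lambda>s. sat s P \<and> bval b s = Some True) c P
    \<Longrightarrow> hoare P (While b c) (\<lambda>s. sat s P \<and> bval b s = Some False)"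
| HConseq: "(\<forall>s. sat s P' \<longrightarrow> sat s P) \<Longrightarrow> hoare P c Q \<Longrightarrow> (\<forall>s. sat s Q \<longrightarrow> sat s Q')
    \<Longrightarrow> hoare P' c Q'"

text \<open>Left variable x is renamed to Inl x (= x_1), right variable x to Inr x (= x_2).\<close>

definition merge :: "'v state \<Rightarrow> 'v state \<Rightarrow> ('v + 'v) state" where
  "merge s1 s2 = (\<lambda>v. case v of Inl x \<Rightarrow> s1 x | Inr x \<Rightarrow> s2 x)"

definition renL_com :: "'v com \<Rightarrow> ('v + 'v) com" where "renL_com = map_com Inl"
definition renR_com :: "'v com \<Rightarrow> ('v + 'v) com" where "renR_com = map_com Inr"
definition renL_bexp :: "'v bexp \<Rightarrow> ('v + 'v) bexp" where "renL_bexp = map_bexp Inl"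
definition renR_bexp :: "'v bexp \<Rightarrow> ('v + 'v) bexp" where "renR_bexp = map_bexp Inr"

definition rel_valid :: "('v + 'v) assn \<Rightarrow> 'v com \<Rightarrow> 'v com \<Rightarrow> ('v + 'v) assn \<Rightarrow> bool" where
  "rel_valid Phi c1 c2 Psi \<longleftrightarrow>
     (\<forall>s1 s2 t1 t2. sat (merge s1 s2) Phi \<longrightarrow> big_step s1 c1 t1 \<longrightarrow> big_step s2 c2 t2
        \<longrightarrow> sat (merge t1 t2) Psi)"

datatype 'v rcom = Aligned "'v com" "'v com" | RSeq "'v rcom" "'v rcom"
  | RIf "'v bexp" "'v bexp" "'v rcom" "'v rcom"
  | RWhile "'v bexp" "'v bexp" "'v rcom"

inductive rbig_step :: "'v state \<times> 'v state \<Rightarrow> 'v rcom \<Rightarrow> 'v state \<times> 'v state \<Rightarrow> bool" where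
  RAligned: "big_step s1 c1 t1 \<Longrightarrow> big_step s2 c2 t2 \<Longrightarrow> rbig_step (s1, s2) (Aligned c1 c2) (t1, t2)"
| RSeq: "rbig_step s r1 s' \<Longrightarrow> rbig_step s' r2 s'' \<Longrightarrow> rbig_step s (RSeq r1 r2) s''"
| RIfTrue: "bval b1 s1 = Some True \<Longrightarrow> bval b2 s2 = Some True \<Longrightarrow> rbig_step (s1, s2) r1 t
    \<Longrightarrow> rbig_step (s1, s2) (RIf b1 b2 r1 r2) t"
| RIfFalse: "bval b1 s1 = Some v1 \<Longrightarrow> bval b2 s2 = Some v2 \<Longrightarrow> \<not> (v1 \<and> v2)
    \<Longrightarrow> rbig_step (s1, s2) r2 t \<Longrightarrow> rbig_step (s1, s2) (RIf b1 b2 r1 r2) t"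
| RWhileFalse: "bval b1 s1 = Some v1 \<Longrightarrow> bval b2 s2 = Some v2 \<Longrightarrow> \<not> (v1 \<and> v2)
    \<Longrightarrow> rbig_step (s1, s2) (RWhile b1 b2 r) (s1, s2)"
| RWhileTrue: "bval b1 s1 = Some True \<Longrightarrow> bval b2 s2 = Some True \<Longrightarrow> rbig_step (s1, s2) r s'
    \<Longrightarrow> rbig_step s' (RWhile b1 b2 r) s'' \<Longrightarrow> rbig_step (s1, s2) (RWhile b1 b2 r) s''"

definition requiv :: "'v rcom \<Rightarrow> 'v rcom \<Rightarrow> bool" where
  "requiv r1 r2 \<longleftrightarrow> (\<forall>s t. rbig_step s r1 t \<longleftrightarrow> rbig_step s r2 t)"

fun reify :: "'v rcom \<Rightarrow> ('v + 'v) com" where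
  "reify (Aligned c1 c2) = Seq (renL_com c1) (renR_com c2)"
| "reify (RSeq r1 r2) = Seq (reify r1) (reify r2)"
| "reify (RWhile b1 b2 r) = While (And (renL_bexp b1) (renR_bexp b2)) (reify r)"
| "reify (RIf b1 b2 r1 r2) = If (And (renL_bexp b1) (renR_bexp b2)) (reify r1) (reify r2)"

end

theory Submission
  imports Defs
begin

text \<open>Every pair of runs of c1 and c2 is a run of the aligned command, hence of r by
  equivalence. The reified program simulates the aligned semantics on merged states,
  so soundness of the Hoare logic applied to this run of the reified program yields
  the postcondition.\<close>

inductive_cases big_step_SkipE: "big_step s SKIP t"
inductive_cases big_step_AssignE: "big_step s (Assign x a) t"
inductive_cases big_step_SeqE: "big_step s (Seq c1 c2) t"
inductive_cases big_step_IfE: "big_step s (If b c1 c2) t"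

lemma hoare_sound: "hoare P c Q \<Longrightarrow> big_step s c t \<Longrightarrow> sat s P \<Longrightarrow> sat t Q"
proof (induction P c Q arbitrary: s t rule: hoare.induct)
  case HSkip
  then show ?case by (auto elim: big_step_SkipE)
next
  case HAssign
  then show ?case by (auto elim!: big_step_AssignE simp: sat_def)
next
  case HSeq
  then show ?case by (blast elim: big_step_SeqE)
next
  case HIf
  then show ?case by (auto elim!: big_step_IfE simp: sat_def)
next
  case (HWhile P b c)
  from HWhile.prems show ?case
  proof (induction s "While b c" t rule: big_step.induct)
    case WhileFalse
    then show ?case by (simp add: sat_def)
  next
    case WhileTrue
    then show ?case using HWhile.IH by (simp add: sat_def)
  qed
next
  case HConseq
  then show ?case by (simp add: sat_def)
qed

lemma aval_map_aexp: "aval (map_aexp f a) s = aval a (s \<circ> f)"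
  by (induction a) (simp_all add: comp_def)

lemma bval_map_bexp: "bval (map_bexp f b) s = bval b (s \<circ> f)"
  by (induction b) (simp_all add: aval_map_aexp comp_def)

lemma big_step_map_com:
  assumes E_comp: "\<And>s. E s \<circ> f = s"
    and E_upd: "\<And>s x v. E (s(x \<mapsto> v)) = (E s)(f x \<mapsto> v)"
  shows "big_step s c t \<Longrightarrow> big_step (E s) (map_com f c) (E t)"
proof (induction rule: big_step.induct)
  case (Assign a s v x)
  then have "big_step (E s) (Assign (f x) (map_aexp f a)) ((E s)(f x \<mapsto> v))"
    by (intro big_step.Assign) (simp add: aval_map_aexp E_comp)
  then show ?case by (simp only: E_upd com.map)
qed (auto intro: big_step.intros simp: bval_map_bexp E_comp)

lemma merge_comp_Inl [simp]: "merge s1 s2 \<circ> Inl = s1"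
  by (auto simp: merge_def)

lemma merge_comp_Inr [simp]: "merge s1 s2 \<circ> Inr = s2"
  by (auto simp: merge_def)

lemma merge_upd_Inl: "merge (s1(x \<mapsto> v)) s2 = (merge s1 s2)(Inl x \<mapsto> v)"
  by (auto simp: merge_def split: sum.split)

lemma merge_upd_Inr: "merge s1 (s2(x \<mapsto> v)) = (merge s1 s2)(Inr x \<mapsto> v)"
  by (auto simp: merge_def split: sum.split)

lemma big_step_renL_com:
  "big_step s1 c t1 \<Longrightarrow> big_step (merge s1 s2) (renL_com c) (merge t1 s2)"
  unfolding renL_com_def
  by (rule big_step_map_com[where E = "\<lambda>s. merge s s2"]) (simp_all add: merge_upd_Inl)

lemma big_step_renR_com:
  "big_step s2 c t2 \<Longrightarrow> big_step (merge s1 s2) (renR_com c) (merge s1 t2)"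
  unfolding renR_com_def
  by (rule big_step_map_com[where E = "merge s1"]) (simp_all add: merge_upd_Inr)

lemma bval_renL_bexp [simp]: "bval (renL_bexp b) (merge s1 s2) = bval b s1"
  by (simp add: renL_bexp_def bval_map_bexp)

lemma bval_renR_bexp [simp]: "bval (renR_bexp b) (merge s1 s2) = bval b s2"
  by (simp add: renR_bexp_def bval_map_bexp)

lemma big_step_reify:
  "rbig_step s r t \<Longrightarrow> big_step (case_prod merge s) (reify r) (case_prod merge t)"
proof (induction rule: rbig_step.induct)
  case RAligned
  then show ?case by (auto intro: big_step.Seq big_step_renL_com big_step_renR_com)
next
  case RSeq
  then show ?case by (auto intro: big_step.Seq)
next
  case RIfTrue
  then show ?case by simp (rule big_step.IfTrue; simp add: lift2_def)
next
  case RIfFalse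
  then show ?case by simp (rule big_step.IfFalse; simp add: lift2_def)
next
  case RWhileFalse
  then show ?case by simp (rule big_step.WhileFalse; simp add: lift2_def)
next
  case RWhileTrue
  then show ?case by simp (rule big_step.WhileTrue; simp add: lift2_def)
qed

theorem corollary3p5:
  fixes c1 c2 :: "'v com" and r :: "'v rcom" and Phi Psi :: "('v + 'v) assn"
  assumes "requiv (Aligned c1 c2) r"
    and "hoare Phi (reify r) Psi"
  shows "rel_valid Phi c1 c2 Psi"
  unfolding rel_valid_def
proof (intro allI impI)
  fix s1 s2 t1 t2
  assume pre: "sat (merge s1 s2) Phi"
    and runs: "big_step s1 c1 t1" "big_step s2 c2 t2"
  from runs have "rbig_step (s1, s2) (Aligned c1 c2) (t1, t2)"
    by (rule rbig_step.RAligned)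
  then have "rbig_step (s1, s2) r (t1, t2)"
    using assms(1) by (simp add: requiv_def)
  then have "big_step (merge s1 s2) (reify r) (merge t1 t2)"
    using big_step_reify by fastforce
  then show "sat (merge t1 t2) Psi"
    using hoare_sound[OF assms(2)] pre by blast
qed

end
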